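(* Let $\Theta$ and $R$ be finite sets and $s_1:\Theta\to\Delta(R)$. Then $s_1$ is monotone with respect to some pair of total orders $(\succsim_\Theta,\succsim_R)$ if and only if the bipartite graph $G(s_1)$ is acyclic and does not contain a forbidden triple.
   Context: $s_1$ is monotone w.r.t. total orders $(\succsim_\Theta,\succsim_R)$ if for any $\theta\succ\theta'$, $r\in\mathrm{supp}(s_1(\theta))$, $r'\in\mathrm{supp}(s_1(\theta'))$, one has $r\succsim r'$. $G(s_1)$ is the bipartite graph with vertex classes $\Theta$ and $R$ in which $\theta$ and $r$ are joined iff $r\in\mathrm{supp}(s_1(\theta))$. A forbidden triple for $s_1$ is either (1) three distinct $r_1,r_2,r_3\in R$ and four distinct $\theta_1,\dots,\theta_4\in\Theta$ with $r_k\in\mathrm{supp}(s_1(\theta_k))$ for $k=1,2,3$ and $\{r_1,r_2,r_3\}\subset\mathrm{supp}(s_1(\theta_4))$; or (2) three distinct $\theta_1,\theta_2,\theta_3\in\Theta$ and four distinct $r_1,\dots,r_4\in R$ with $\{r_k,r_4\}\subset\mathrm{supp}(s_1(\theta_k))$ for $k=1,2,3$. *)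

theory Defs
  imports "HOL-Probability.Probability_Mass_Function"
begin

text \<open>A total order on a type is a relation le with linear_order_on UNIV le,
 where (x, y) in le means x is below-or-equal y (y \<succsim> x).\<close>

definition monotone_wrt :: "('t \<Rightarrow> 'r pmf) \<Rightarrow> ('t \<times> 't) set \<Rightarrow> ('r \<times> 'r) set \<Rightarrow> bool" where
  "monotone_wrt s1 leT leR \<longleftrightarrow>
     (\<forall>\<theta> \<theta>' r r'. (\<theta>', \<theta>) \<in> leT \<and> \<theta> \<noteq> \<theta>' \<and> r \<in> set_pmf (s1 \<theta>) \<and> r' \<in> set_pmf (s1 \<theta>')
        \<longrightarrow> (r', r) \<in> leR)"

definition G_adj :: "('t \<Rightarrow> 'r pmf) \<Rightarrow> ('t + 'r) \<Rightarrow> ('t + 'r) \<Rightarrow> bool" where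
  "G_adj s1 u v \<longleftrightarrow>
     (\<exists>\<theta> r. r \<in> set_pmf (s1 \<theta>) \<and> ((u = Inl \<theta> \<and> v = Inr r) \<or> (u = Inr r \<and> v = Inl \<theta>)))"

definition is_cycle :: "('a \<Rightarrow> 'a \<Rightarrow> bool) \<Rightarrow> 'a list \<Rightarrow> bool" where
  "is_cycle adj vs \<longleftrightarrow> length vs \<ge> 3 \<and> distinct vs \<and>
     (\<forall>i < length vs. adj (vs ! i) (vs ! ((i + 1) mod length vs)))"

definition G_acyclic :: "('t \<Rightarrow> 'r pmf) \<Rightarrow> bool" where
  "G_acyclic s1 \<longleftrightarrow> \<not> (\<exists>vs. is_cycle (G_adj s1) vs)"

definition has_forbidden_triple :: "('t \<Rightarrow> 'r pmf) \<Rightarrow> bool" where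
  "has_forbidden_triple s1 \<longleftrightarrow>
     (\<exists>r1 r2 r3 \<theta>1 \<theta>2 \<theta>3 \<theta>4.
        distinct [r1, r2, r3] \<and> distinct [\<theta>1, \<theta>2, \<theta>3, \<theta>4] \<and>
        r1 \<in> set_pmf (s1 \<theta>1) \<and> r2 \<in> set_pmf (s1 \<theta>2) \<and> r3 \<in> set_pmf (s1 \<theta>3) \<and>
        {r1, r2, r3} \<subseteq> set_pmf (s1 \<theta>4))
   \<or> (\<exists>\<theta>1 \<theta>2 \<theta>3 r1 r2 r3 r4.
        distinct [\<theta>1, \<theta>2, \<theta>3] \<and> distinct [r1, r2, r3, r4] \<and>
        {r1, r4} \<subseteq> set_pmf (s1 \<theta>1) \<and> {r2, r4} \<subseteq> set_pmf (s1 \<theta>2) \<and>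
        {r3, r4} \<subseteq> set_pmf (s1 \<theta>3))"

end

(*
  Linear orders on the finite types are handled as injective ranks into nat; s1 is monotone
  iff the support of a lower-ranked type lies weakly below that of a higher-ranked one.

  Necessity: on a cycle of G(s1), the type of largest rank has two distinct neighbours on the
  cycle, each of which is also in the support of a lower-ranked type, so monotonicity puts each
  of them below the other.  Forbidden triples only need pairwise separation of the supports: a
  point shared by two supports is an endpoint of both, a support has only two endpoints, and two
  supports sharing r4 lie on opposite sides of it.

  Sufficiency: rank R by adding the supports one at a time, keeping them pairwise separated and
  each an interval of their union.  In a forest some type shares at most one point r0 with the
  other supports; after normalising the ranking so that r0 is an endpoint (if the new support
  has further points: the top) of every support containing it, the new points are inserted as a
  block right after r0.  The normalisations are where the absence of forbidden triples is used.
  Finally the types are ranked by the least plus the largest rank in their support.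
*)
theory Submission
  imports Defs "HOL-Combinatorics.Transposition"
begin

lemma finite_obtain_max:
  fixes f :: "'a \<Rightarrow> 'b::linorder"
  assumes "finite A" "A \<noteq> {}"
  obtains x where "x \<in> A" "\<And>y. y \<in> A \<Longrightarrow> f y \<le> f x"
proof -
  have "Max (f ` A) \<in> f ` A" using assms by simp
  then obtain x where "x \<in> A" "f x = Max (f ` A)" by (metis imageE)
  then show thesis using that assms by simp
qed

lemma finite_obtain_min:
  fixes f :: "'a \<Rightarrow> 'b::linorder"
  assumes "finite A" "A \<noteq> {}"
  obtains x where "x \<in> A" "\<And>y. y \<in> A \<Longrightarrow> f x \<le> f y"
proof -
  have "Min (f ` A) \<in> f ` A" using assms by simp
  then obtain x where "x \<in> A" "f x = Min (f ` A)" by (metis imageE)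
  then show thesis using that assms by simp
qed

lemma linear_order_on_rank:
  fixes f :: "'a \<Rightarrow> 'b::linorder"
  assumes "inj f"
  shows "linear_order_on UNIV {(x, y). f x \<le> f y}"
  unfolding linear_order_on_def partial_order_on_def preorder_on_def
proof (intro conjI)
  show "{(x, y). f x \<le> f y} \<subseteq> UNIV \<times> UNIV" by simp
  show "refl_on UNIV {(x, y). f x \<le> f y}" unfolding refl_on_def by simp
  show "trans {(x, y). f x \<le> f y}" unfolding trans_on_def by (auto intro: order_trans)
  show "antisym {(x, y). f x \<le> f y}" unfolding antisym_on_def using assms by (simp add: injD)
  show "total_on UNIV {(x, y). f x \<le> f y}" unfolding total_on_def by auto
qed

lemma linear_order_on_UNIV_ex_rank:
  fixes le :: "('a::finite \<times> 'a) set"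
  assumes "linear_order_on UNIV le"
  shows "\<exists>f :: 'a \<Rightarrow> nat. inj f \<and> le = {(x, y). f x \<le> f y}"
proof -
  have lin: "refl_on UNIV le" "trans le" "antisym le" "total_on UNIV le"
    using assms unfolding linear_order_on_def partial_order_on_def preorder_on_def by auto
  define f where "f x = card {z. (z, x) \<in> le}" for x
  have le_f: "f x \<le> f y" if "(x, y) \<in> le" for x y
    unfolding f_def using that transD[OF lin(2)] by (intro card_mono) auto
  have less_f: "f y < f x" if "(x, y) \<notin> le" for x y
  proof -
    have "(x, x) \<in> le" using refl_onD[OF lin(1)] by simp
    then have "(y, x) \<in> le" using lin(4) that unfolding total_on_def by (metis UNIV_I)
    then have sub: "{z. (z, y) \<in> le} \<subseteq> {z. (z, x) \<in> le}" using transD[OF lin(2)] by blast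
    have "x \<in> {z. (z, x) \<in> le}" "x \<notin> {z. (z, y) \<in> le}" using \<open>(x, x) \<in> le\<close> that by simp_all
    then show ?thesis unfolding f_def using sub by (intro psubset_card_mono) auto
  qed
  have "le = {(x, y). f x \<le> f y}"
    using le_f less_f by (auto simp: not_le[symmetric])
  moreover have "inj f"
    using antisymD[OF lin(3)] le_f less_f by (intro injI) (metis not_le order.refl)
  ultimately show ?thesis by blast
qed

lemma ex_inj_rank_refining:
  fixes k :: "'a::finite \<Rightarrow> nat"
  shows "\<exists>f :: 'a \<Rightarrow> nat. inj f \<and> (\<forall>x y. f x \<le> f y \<longrightarrow> k x \<le> k y)"
proof -
  obtain t :: "'a \<Rightarrow> nat" and n where t: "inj t" "range t = {..<n}"
    using finite_imp_inj_to_nat_seg[of "UNIV :: 'a set"] by (auto simp: lessThan_def)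
  have t_less: "t x < n" for x using t(2) by auto
  define f where "f x = k x * n + t x" for x
  have k_div: "f x div n = k x" and t_mod: "f x mod n = t x" for x
    using t_less[of x] unfolding f_def by simp_all
  have "inj f"
  proof (rule injI)
    fix x y assume "f x = f y"
    then have "t x = t y" using t_mod by metis
    then show "x = y" using t(1) by (simp add: inj_eq)
  qed
  moreover have "k x \<le> k y" if "f x \<le> f y" for x y
    using div_le_mono[OF that, of n] k_div by simp
  ultimately show ?thesis by blast
qed

definition rank_monotone ::
    "('t \<Rightarrow> 'r set) \<Rightarrow> ('t \<Rightarrow> 'a::linorder) \<Rightarrow> ('r \<Rightarrow> 'b::linorder) \<Rightarrow> bool" where
  "rank_monotone A f g \<longleftrightarrow>
     (\<forall>\<theta> \<theta>' r r'. f \<theta>' < f \<theta> \<longrightarrow> r \<in> A \<theta> \<longrightarrow> r' \<in> A \<theta>' \<longrightarrow> g r' \<le> g r)"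

definition separated_on :: "'t set \<Rightarrow> ('t \<Rightarrow> 'r set) \<Rightarrow> ('r \<Rightarrow> 'b::linorder) \<Rightarrow> bool" where
  "separated_on T A p \<longleftrightarrow> (\<forall>\<theta>\<in>T. \<forall>\<theta>'\<in>T. \<theta> \<noteq> \<theta>' \<longrightarrow>
     (\<forall>a\<in>A \<theta>. \<forall>b\<in>A \<theta>'. p a \<le> p b) \<or> (\<forall>a\<in>A \<theta>. \<forall>b\<in>A \<theta>'. p b \<le> p a))"

lemma monotone_wrt_rank_iff:
  assumes "inj f" "inj g"
  shows "monotone_wrt s1 {(x, y). f x \<le> f y} {(a, b). g a \<le> g b} \<longleftrightarrow>
    rank_monotone (set_pmf \<circ> s1) f g"
  unfolding monotone_wrt_def rank_monotone_def using assms by (auto simp: inj_eq less_le)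

lemma monotone_wrt_ex_iff_rank_monotone:
  fixes s1 :: "'t::finite \<Rightarrow> 'r::finite pmf"
  shows "(\<exists>leT leR. linear_order_on UNIV leT \<and> linear_order_on UNIV leR \<and> monotone_wrt s1 leT leR)
    \<longleftrightarrow> (\<exists>(f :: 't \<Rightarrow> nat) (g :: 'r \<Rightarrow> nat). inj f \<and> inj g \<and> rank_monotone (set_pmf \<circ> s1) f g)"
proof
  assume "\<exists>leT leR. linear_order_on UNIV leT \<and> linear_order_on UNIV leR \<and> monotone_wrt s1 leT leR"
  then obtain leT leR where lin: "linear_order_on UNIV leT" "linear_order_on UNIV leR"
    and "monotone_wrt s1 leT leR"
    by blast
  obtain f :: "'t \<Rightarrow> nat" where f: "inj f" "leT = {(x, y). f x \<le> f y}"
    using linear_order_on_UNIV_ex_rank[OF lin(1)] by blast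
  obtain g :: "'r \<Rightarrow> nat" where g: "inj g" "leR = {(a, b). g a \<le> g b}"
    using linear_order_on_UNIV_ex_rank[OF lin(2)] by blast
  have "rank_monotone (set_pmf \<circ> s1) f g"
    using \<open>monotone_wrt s1 leT leR\<close> monotone_wrt_rank_iff[OF f(1) g(1)] f(2) g(2) by simp
  with f(1) g(1)
  show "\<exists>(f :: 't \<Rightarrow> nat) (g :: 'r \<Rightarrow> nat). inj f \<and> inj g \<and> rank_monotone (set_pmf \<circ> s1) f g"
    by blast
next
  assume "\<exists>(f :: 't \<Rightarrow> nat) (g :: 'r \<Rightarrow> nat). inj f \<and> inj g \<and> rank_monotone (set_pmf \<circ> s1) f g"
  then obtain f :: "'t \<Rightarrow> nat" and g :: "'r \<Rightarrow> nat"
    where "inj f" "inj g" "rank_monotone (set_pmf \<circ> s1) f g"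
    by blast
  then have "monotone_wrt s1 {(x, y). f x \<le> f y} {(a, b). g a \<le> g b}"
    using monotone_wrt_rank_iff by blast
  then show "\<exists>leT leR. linear_order_on UNIV leT \<and> linear_order_on UNIV leR \<and> monotone_wrt s1 leT leR"
    using linear_order_on_rank[OF \<open>inj f\<close>] linear_order_on_rank[OF \<open>inj g\<close>] by blast
qed

lemma rank_monotone_separated:
  assumes "inj f" "rank_monotone A f g"
  shows "separated_on UNIV A g"
  using assms unfolding separated_on_def rank_monotone_def by (metis inj_eq linorder_neq_iff)

lemma separated_onD:
  assumes "separated_on T A p" "\<theta> \<in> T" "\<theta>' \<in> T" "\<theta> \<noteq> \<theta>'"
  shows "(\<forall>a\<in>A \<theta>. \<forall>b\<in>A \<theta>'. p a \<le> p b) \<or> (\<forall>a\<in>A \<theta>. \<forall>b\<in>A \<theta>'. p b \<le> p a)"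
  using assms unfolding separated_on_def by blast

lemma separated_on_shared_endpoint:
  assumes "separated_on T A p" "\<theta> \<in> T" "\<theta>' \<in> T" "\<theta> \<noteq> \<theta>'" "r \<in> A \<theta>" "r \<in> A \<theta>'"
  shows "(\<forall>a\<in>A \<theta>. p a \<le> p r) \<or> (\<forall>a\<in>A \<theta>. p r \<le> p a)"
  using assms unfolding separated_on_def by blast

lemma separated_on_shared_sides:
  assumes "separated_on T A p" "\<theta> \<in> T" "\<theta>' \<in> T" "\<theta> \<noteq> \<theta>'" "r \<in> A \<theta>" "r \<in> A \<theta>'"
    and "a \<in> A \<theta>" "b \<in> A \<theta>'"
  shows "\<not> (p a < p r \<and> p b < p r)" and "\<not> (p r < p a \<and> p r < p b)"
  using assms unfolding separated_on_def by (meson leD)+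

lemma separated_on_insert:
  assumes "separated_on T A p"
    and "\<forall>\<theta>\<in>T. (\<forall>a\<in>A \<theta>. \<forall>b\<in>A \<theta>0. p a \<le> p b) \<or> (\<forall>a\<in>A \<theta>. \<forall>b\<in>A \<theta>0. p b \<le> p a)"
  shows "separated_on (insert \<theta>0 T) A p"
  using assms unfolding separated_on_def by (metis insert_iff)

(* For separated supports the order by min + max of the ranks agrees with their relative
   position; ties between distinct types only arise for equal singleton supports. *)
lemma separated_on_UNIV_ex_rank_monotone:
  fixes A :: "'t::finite \<Rightarrow> 'r set" and p :: "'r \<Rightarrow> nat"
  assumes sep: "separated_on UNIV A p" and fin: "\<And>\<theta>. finite (A \<theta>)" and ne: "\<And>\<theta>. A \<theta> \<noteq> {}"
  shows "\<exists>f :: 't \<Rightarrow> nat. inj f \<and> rank_monotone A f p"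
proof -
  define lo where "lo \<theta> = Min (p ` A \<theta>)" for \<theta>
  define hi where "hi \<theta> = Max (p ` A \<theta>)" for \<theta>
  have lo: "lo \<theta> \<le> p a" and hi: "p a \<le> hi \<theta>" if "a \<in> A \<theta>" for a \<theta>
    using that fin unfolding lo_def hi_def by simp_all
  have lo_in: "lo \<theta> \<in> p ` A \<theta>" and hi_in: "hi \<theta> \<in> p ` A \<theta>" for \<theta>
    using fin ne unfolding lo_def hi_def by simp_all
  obtain f :: "'t \<Rightarrow> nat" where "inj f" and f: "\<And>x y. f x \<le> f y \<Longrightarrow> lo x + hi x \<le> lo y + hi y"
    using ex_inj_rank_refining[of "\<lambda>\<theta>. lo \<theta> + hi \<theta>"] by blast
  have "p r' \<le> p r" if "f \<theta>' < f \<theta>" "r \<in> A \<theta>" "r' \<in> A \<theta>'" for \<theta> \<theta>' r r'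
  proof -
    from that(1) have "\<theta> \<noteq> \<theta>'" and key: "lo \<theta>' + hi \<theta>' \<le> lo \<theta> + hi \<theta>" using f by auto
    from separated_onD[OF sep UNIV_I UNIV_I this(1)]
    show "p r' \<le> p r"
    proof
      assume "\<forall>a\<in>A \<theta>. \<forall>b\<in>A \<theta>'. p a \<le> p b"
      then have "hi \<theta> \<le> lo \<theta>'" using lo_in[of \<theta>'] hi_in[of \<theta>] by fastforce
      moreover have "lo \<theta> \<le> hi \<theta>" for \<theta> using lo_in[of \<theta>] hi by fastforce
      ultimately show ?thesis using key lo[OF \<open>r \<in> A \<theta>\<close>] hi[OF \<open>r' \<in> A \<theta>'\<close>] by linarith
    qed (use that(2,3) in blast)
  qed
  with \<open>inj f\<close> show ?thesis unfolding rank_monotone_def by blast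
qed

section \<open>Cycles and forbidden triples\<close>

lemma G_adj_simps [simp]:
  "G_adj s1 (Inl \<theta>) (Inl \<theta>') \<longleftrightarrow> False" "G_adj s1 (Inr r) (Inr r') \<longleftrightarrow> False"
  "G_adj s1 (Inl \<theta>) (Inr r) \<longleftrightarrow> r \<in> set_pmf (s1 \<theta>)"
  "G_adj s1 (Inr r) (Inl \<theta>) \<longleftrightarrow> r \<in> set_pmf (s1 \<theta>)"
  unfolding G_adj_def by auto

lemma is_cycleI:
  assumes "distinct vs" "successively adj vs" "3 \<le> length vs" "adj (last vs) (hd vs)"
  shows "is_cycle adj vs"
  unfolding is_cycle_def
proof (intro conjI allI impI)
  fix i assume i: "i < length vs"
  show "adj (vs ! i) (vs ! ((i + 1) mod length vs))"
  proof (cases "Suc i < length vs")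
    case True
    then show ?thesis using successively_nth[OF assms(2)] by simp
  next
    case False
    then have "i = length vs - 1" using i by simp
    moreover have "vs \<noteq> []" using assms(3) by auto
    ultimately show ?thesis using assms(4) by (simp add: last_conv_nth hd_conv_nth)
  qed
qed (use assms in auto)

lemma is_cycle_rotate:
  assumes "is_cycle adj vs"
  shows "is_cycle adj (rotate k vs)"
proof -
  let ?n = "length vs"
  have "adj (rotate k vs ! i) (rotate k vs ! ((i + 1) mod ?n))" if "i < ?n" for i
  proof -
    have "0 < ?n" using that by linarith
    then have "(k + i) mod ?n < ?n" by simp
    then have "adj (vs ! ((k + i) mod ?n)) (vs ! (((k + i) mod ?n + 1) mod ?n))"
      using assms unfolding is_cycle_def by blast
    moreover have "(k + (i + 1) mod ?n) mod ?n = ((k + i) mod ?n + 1) mod ?n"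
      by (simp add: mod_simps add.assoc)
    ultimately show ?thesis using that \<open>0 < ?n\<close> by (simp add: nth_rotate)
  qed
  then show ?thesis using assms unfolding is_cycle_def by simp
qed

lemma G_cycle_has_Inl:
  assumes "is_cycle (G_adj s1) vs"
  shows "\<exists>\<theta>. Inl \<theta> \<in> set vs"
proof -
  have "3 \<le> length vs" using assms unfolding is_cycle_def by simp
  then have in_vs: "vs ! 0 \<in> set vs" "vs ! 1 \<in> set vs" by (auto intro!: nth_mem)
  have "G_adj s1 (vs ! 0) (vs ! 1)"
    using assms \<open>3 \<le> length vs\<close> unfolding is_cycle_def by force
  then show ?thesis
    using in_vs by (cases "vs ! 0"; cases "vs ! 1") auto
qed

lemma G_cycle_Inl_neighbours:
  assumes cyc: "is_cycle (G_adj s1) vs" and "Inl \<theta> \<in> set vs"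
  shows "\<exists>ra rb \<theta>a \<theta>b. ra \<noteq> rb \<and> ra \<in> set_pmf (s1 \<theta>) \<and> rb \<in> set_pmf (s1 \<theta>) \<and>
    Inl \<theta>a \<in> set vs \<and> \<theta>a \<noteq> \<theta> \<and> ra \<in> set_pmf (s1 \<theta>a) \<and>
    Inl \<theta>b \<in> set vs \<and> \<theta>b \<noteq> \<theta> \<and> rb \<in> set_pmf (s1 \<theta>b)"
proof -
  let ?n = "length vs"
  obtain i where "i < ?n" "vs ! i = Inl \<theta>" using \<open>Inl \<theta> \<in> set vs\<close> by (meson in_set_conv_nth)
  define cs where "cs = rotate i vs"
  have n3: "3 \<le> ?n" using cyc unfolding is_cycle_def by simp
  then have "vs \<noteq> []" by auto
  have "cs ! 0 = vs ! (i mod ?n)" unfolding cs_def using nth_rotate[of 0 vs i] n3 by fastforce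
  then have cs: "is_cycle (G_adj s1) cs" "length cs = ?n" "distinct cs" "set cs = set vs"
    "cs ! 0 = Inl \<theta>"
    using is_cycle_rotate[OF cyc] \<open>i < ?n\<close> \<open>vs ! i = Inl \<theta>\<close> cyc unfolding is_cycle_def
    by (simp_all add: cs_def)
  have adj: "G_adj s1 (cs ! j) (cs ! ((j + 1) mod ?n))" if "j < ?n" for j
    using cs(1,2) that unfolding is_cycle_def by metis
  have a01: "G_adj s1 (cs ! 0) (cs ! 1)" using adj[of 0] n3 \<open>vs \<noteq> []\<close> by simp
  have a12: "G_adj s1 (cs ! 1) (cs ! 2)" using adj[of 1] n3 \<open>vs \<noteq> []\<close> by (simp add: numeral_2_eq_2)
  have a_last: "G_adj s1 (cs ! (?n - 2)) (cs ! (?n - 1))"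
    using adj[of "?n - 2"] n3 \<open>vs \<noteq> []\<close> by (simp add: Suc_diff_Suc numeral_2_eq_2)
  have a_close: "G_adj s1 (cs ! (?n - 1)) (cs ! 0)" using adj[of "?n - 1"] n3 \<open>vs \<noteq> []\<close> by simp
  obtain ra where ra: "cs ! 1 = Inr ra" "ra \<in> set_pmf (s1 \<theta>)"
    using a01 cs(5) by (cases "cs ! 1") auto
  obtain \<theta>a where \<theta>a: "cs ! 2 = Inl \<theta>a" "ra \<in> set_pmf (s1 \<theta>a)"
    using a12 ra by (cases "cs ! 2") auto
  obtain rb where rb: "cs ! (?n - 1) = Inr rb" "rb \<in> set_pmf (s1 \<theta>)"
    using a_close cs(5) by (cases "cs ! (?n - 1)") auto
  obtain \<theta>b where \<theta>b: "cs ! (?n - 2) = Inl \<theta>b" "rb \<in> set_pmf (s1 \<theta>b)"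
    using a_last rb by (cases "cs ! (?n - 2)") auto
  have distinct_at: "cs ! j \<noteq> cs ! k" if "j < ?n" "k < ?n" "j \<noteq> k" for j k
    using that cs(2,3) by (simp add: nth_eq_iff_index_eq)
  have "ra \<noteq> rb" using distinct_at[of 1 "?n - 1"] ra(1) rb(1) n3 \<open>vs \<noteq> []\<close> by auto
  moreover have "\<theta>a \<noteq> \<theta>" using distinct_at[of 2 0] \<theta>a(1) cs(5) n3 \<open>vs \<noteq> []\<close> by auto
  moreover have "\<theta>b \<noteq> \<theta>" using distinct_at[of "?n - 2" 0] \<theta>b(1) cs(5) n3 \<open>vs \<noteq> []\<close> by auto
  moreover have "Inl \<theta>a \<in> set vs" "Inl \<theta>b \<in> set vs"
    using nth_mem[of 2 cs] nth_mem[of "?n - 2" cs] \<theta>a(1) \<theta>b(1) cs(2,4) n3 by auto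
  ultimately show ?thesis using ra(2) rb(2) \<theta>a(2) \<theta>b(2) by blast
qed

lemma has_forbidden_tripleI1:
  assumes "distinct [r1, r2, r3]" "distinct [\<theta>1, \<theta>2, \<theta>3, \<theta>4]"
    "r1 \<in> set_pmf (s1 \<theta>1)" "r2 \<in> set_pmf (s1 \<theta>2)" "r3 \<in> set_pmf (s1 \<theta>3)"
    "{r1, r2, r3} \<subseteq> set_pmf (s1 \<theta>4)"
  shows "has_forbidden_triple s1"
  using assms unfolding has_forbidden_triple_def by blast

lemma has_forbidden_tripleI2:
  assumes "distinct [\<theta>1, \<theta>2, \<theta>3]" "distinct [r1, r2, r3, r4]"
    "{r1, r4} \<subseteq> set_pmf (s1 \<theta>1)" "{r2, r4} \<subseteq> set_pmf (s1 \<theta>2)" "{r3, r4} \<subseteq> set_pmf (s1 \<theta>3)"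
  shows "has_forbidden_triple s1"
  using assms unfolding has_forbidden_triple_def by blast

lemma G_acyclic_path_extension:
  assumes acyc: "G_acyclic s1"
    and path: "distinct (Inl \<theta>0 # ws)" "successively (G_adj s1) (Inl \<theta>0 # ws)"
    and r: "r \<in> set_pmf (s1 \<theta>0)" "r \<in> set_pmf (s1 \<theta>)" "\<theta> \<noteq> \<theta>0"
    and not_next: "\<forall>us. ws \<noteq> Inr r # us"
  shows "Inr r \<notin> set ws" and "Inl \<theta> \<notin> set ws"
proof -
  show r_new: "Inr r \<notin> set ws"
  proof
    assume "Inr r \<in> set ws"
    then obtain us zs where ws: "ws = us @ Inr r # zs" by (meson split_list)
    have "us \<noteq> []" using not_next ws by auto
    let ?cs = "Inl \<theta>0 # us @ [Inr r]"
    have "Inl \<theta>0 # ws = ?cs @ zs" by (simp add: ws)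
    then have "distinct ?cs" "successively (G_adj s1) ?cs"
      using path by (simp_all only: distinct_append successively_append_iff)
    then have "is_cycle (G_adj s1) ?cs"
      using \<open>us \<noteq> []\<close> r(1) by (intro is_cycleI) (auto simp: Suc_le_eq)
    then show False using acyc unfolding G_acyclic_def by blast
  qed
  show "Inl \<theta> \<notin> set ws"
  proof
    assume "Inl \<theta> \<in> set ws"
    then obtain us zs where ws: "ws = us @ Inl \<theta> # zs" by (meson split_list)
    let ?ps = "Inl \<theta>0 # us @ [Inl \<theta>]"
    have "Inl \<theta>0 # ws = ?ps @ zs" by (simp add: ws)
    then have "distinct ?ps" "successively (G_adj s1) ?ps"
      using path by (simp_all only: distinct_append successively_append_iff)
    moreover have "Inr r \<notin> set ?ps" using r_new ws by auto
    moreover have "successively (G_adj s1) (?ps @ [Inr r])"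
      using \<open>successively (G_adj s1) ?ps\<close> r(2) unfolding successively_append_iff by simp
    ultimately have "is_cycle (G_adj s1) (?ps @ [Inr r])"
      using r(1) by (intro is_cycleI) auto
    then show False using acyc unfolding G_acyclic_def by blast
  qed
qed

(* Take theta0 as the first vertex of a longest path starting in T: a second point shared with
   another support would extend the path. *)
lemma G_acyclic_ex_leaf:
  fixes s1 :: "'t::finite \<Rightarrow> 'r::finite pmf"
  assumes acyc: "G_acyclic s1" and "T \<noteq> {}"
  shows "\<exists>\<theta>0\<in>T. \<exists>r. set_pmf (s1 \<theta>0) \<inter> \<Union>((set_pmf \<circ> s1) ` (T - {\<theta>0})) \<subseteq> {r}"
proof -
  define path where
    "path vs \<longleftrightarrow> distinct vs \<and> successively (G_adj s1) vs \<and> (\<exists>\<theta>\<in>T. \<exists>ws. vs = Inl \<theta> # ws)" for vs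
  obtain \<theta>a where "\<theta>a \<in> T" using \<open>T \<noteq> {}\<close> by blast
  then have "path [Inl \<theta>a]" unfolding path_def by simp
  moreover have "length vs < Suc (CARD('t + 'r))" if "path vs" for vs
  proof -
    have "length vs = card (set vs)" using that unfolding path_def by (simp add: distinct_card)
    also have "\<dots> \<le> CARD('t + 'r)" by (rule card_mono) auto
    finally show ?thesis by simp
  qed
  ultimately have "\<exists>vs. path vs \<and> (\<forall>us. path us \<longrightarrow> length us \<le> length vs)"
    by (intro ex_has_greatest_nat[of path "[Inl \<theta>a]" length "Suc (CARD('t + 'r))"]) auto
  then obtain \<theta>0 ws where "\<theta>0 \<in> T" and path: "distinct (Inl \<theta>0 # ws)" "successively (G_adj s1) (Inl \<theta>0 # ws)"
    and longest: "\<And>us. path us \<Longrightarrow> length us \<le> Suc (length ws)"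
    unfolding path_def by fastforce
  let ?X = "set_pmf (s1 \<theta>0) \<inter> \<Union>((set_pmf \<circ> s1) ` (T - {\<theta>0}))"
  have "\<exists>r. ?X \<subseteq> {r}"
  proof (rule ccontr)
    assume no: "\<nexists>r. ?X \<subseteq> {r}"
    then obtain a where "a \<in> ?X" by blast
    moreover obtain b where "b \<in> ?X" "b \<noteq> a" using no by blast
    moreover have "\<exists>r\<in>{a, b}. \<forall>us. ws \<noteq> Inr r # us" using \<open>b \<noteq> a\<close> by (cases ws) auto
    ultimately obtain r \<theta> where r: "r \<in> set_pmf (s1 \<theta>0)" "r \<in> set_pmf (s1 \<theta>)" "\<theta> \<in> T" "\<theta> \<noteq> \<theta>0"
      and not_next: "\<forall>us. ws \<noteq> Inr r # us"
      by auto
    have "path (Inl \<theta> # Inr r # Inl \<theta>0 # ws)"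
      using G_acyclic_path_extension[OF acyc path r(1,2,4) not_next] path r unfolding path_def by auto
    then show False using longest by fastforce
  qed
  with \<open>\<theta>0 \<in> T\<close> show ?thesis by blast
qed

section \<open>Necessity\<close>

lemma rank_monotone_acyclic:
  fixes f :: "'t \<Rightarrow> 'a::linorder" and g :: "'r \<Rightarrow> 'b::linorder"
  assumes "inj f" "inj g" and mono: "rank_monotone (set_pmf \<circ> s1) f g"
  shows "G_acyclic s1"
  unfolding G_acyclic_def
proof
  assume "\<exists>vs. is_cycle (G_adj s1) vs"
  then obtain vs where cyc: "is_cycle (G_adj s1) vs" by blast
  then have "Inl -` set vs \<noteq> {}" using G_cycle_has_Inl by fastforce
  then obtain \<theta> where "Inl \<theta> \<in> set vs" and \<theta>_max: "\<And>\<theta>'. Inl \<theta>' \<in> set vs \<Longrightarrow> f \<theta>' \<le> f \<theta>"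
    using finite_obtain_max[of "Inl -` set vs" f] by (auto simp: finite_vimageI)
  then obtain ra rb \<theta>a \<theta>b where "ra \<noteq> rb" "ra \<in> set_pmf (s1 \<theta>)" "rb \<in> set_pmf (s1 \<theta>)"
    and \<theta>a: "Inl \<theta>a \<in> set vs" "\<theta>a \<noteq> \<theta>" "ra \<in> set_pmf (s1 \<theta>a)"
    and \<theta>b: "Inl \<theta>b \<in> set vs" "\<theta>b \<noteq> \<theta>" "rb \<in> set_pmf (s1 \<theta>b)"
    using G_cycle_Inl_neighbours[OF cyc] by blast
  have below: "f \<theta>' < f \<theta>" if "Inl \<theta>' \<in> set vs" "\<theta>' \<noteq> \<theta>" for \<theta>'
    using \<theta>_max[OF that(1)] that(2) \<open>inj f\<close> by (metis inj_eq order_le_neq_trans)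
  have "g ra \<le> g rb"
    using mono below[OF \<theta>a(1,2)] \<theta>a(3) \<open>rb \<in> set_pmf (s1 \<theta>)\<close> unfolding rank_monotone_def by simp
  moreover have "g rb \<le> g ra"
    using mono below[OF \<theta>b(1,2)] \<theta>b(3) \<open>ra \<in> set_pmf (s1 \<theta>)\<close> unfolding rank_monotone_def by simp
  ultimately show False using \<open>ra \<noteq> rb\<close> \<open>inj g\<close> by (simp add: inj_eq)
qed

lemma separated_no_forbidden_triple:
  assumes "inj g" and sep: "separated_on UNIV (set_pmf \<circ> s1) g"
  shows "\<not> has_forbidden_triple s1"
  unfolding has_forbidden_triple_def
proof (intro notI, elim disjE exE conjE)
  fix r1 r2 r3 \<theta>1 \<theta>2 \<theta>3 \<theta>4
  assume r: "distinct [r1, r2, r3]" and \<theta>: "distinct [\<theta>1, \<theta>2, \<theta>3, \<theta>4]"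
    and "r1 \<in> set_pmf (s1 \<theta>1)" "r2 \<in> set_pmf (s1 \<theta>2)" "r3 \<in> set_pmf (s1 \<theta>3)"
    and sub: "{r1, r2, r3} \<subseteq> set_pmf (s1 \<theta>4)"
  have ends: "(g r1 \<le> g r \<and> g r2 \<le> g r \<and> g r3 \<le> g r) \<or> (g r \<le> g r1 \<and> g r \<le> g r2 \<and> g r \<le> g r3)"
    if r_in: "r \<in> {r1, r2, r3}" for r
  proof -
    obtain \<theta> where "\<theta> \<noteq> \<theta>4" "r \<in> set_pmf (s1 \<theta>)"
      using r_in \<theta> \<open>r1 \<in> set_pmf (s1 \<theta>1)\<close> \<open>r2 \<in> set_pmf (s1 \<theta>2)\<close> \<open>r3 \<in> set_pmf (s1 \<theta>3)\<close>
      by auto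
    then show ?thesis
      using separated_on_shared_endpoint[OF sep UNIV_I UNIV_I, of \<theta>4 \<theta> r] sub r_in by auto
  qed
  have "g r1 \<noteq> g r2" "g r1 \<noteq> g r3" "g r2 \<noteq> g r3"
    using r \<open>inj g\<close> by (auto simp: inj_eq)
  with ends[of r1] ends[of r2] ends[of r3] show False
    by (auto; order)
next
  fix \<theta>1 \<theta>2 \<theta>3 r1 r2 r3 r4
  assume \<theta>: "distinct [\<theta>1, \<theta>2, \<theta>3]" and r: "distinct [r1, r2, r3, r4]"
    and "{r1, r4} \<subseteq> set_pmf (s1 \<theta>1)" "{r2, r4} \<subseteq> set_pmf (s1 \<theta>2)" "{r3, r4} \<subseteq> set_pmf (s1 \<theta>3)"
  then have "\<not> (g r1 < g r4 \<and> g r2 < g r4)" "\<not> (g r4 < g r1 \<and> g r4 < g r2)"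
    "\<not> (g r1 < g r4 \<and> g r3 < g r4)" "\<not> (g r4 < g r1 \<and> g r4 < g r3)"
    "\<not> (g r2 < g r4 \<and> g r3 < g r4)" "\<not> (g r4 < g r2 \<and> g r4 < g r3)"
    using separated_on_shared_sides[OF sep] by (simp_all, metis+)
  moreover have "g r1 \<noteq> g r4" "g r2 \<noteq> g r4" "g r3 \<noteq> g r4"
    using r \<open>inj g\<close> by (auto simp: inj_eq)
  ultimately show False by (simp add: linorder_neq_iff) blast
qed

section \<open>Interval layouts\<close>

definition intervals_on :: "'t set \<Rightarrow> ('t \<Rightarrow> 'r set) \<Rightarrow> ('r \<Rightarrow> 'b::linorder) \<Rightarrow> bool" where
  "intervals_on T A p \<longleftrightarrow>
     (\<forall>\<theta>\<in>T. \<forall>a\<in>A \<theta>. \<forall>c\<in>A \<theta>. \<forall>b\<in>\<Union>(A ` T). p a \<le> p b \<longrightarrow> p b \<le> p c \<longrightarrow> b \<in> A \<theta>)"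

(* Separation alone is not preserved when a support is added; the interval condition is what
   lets the insertion steps below keep it. *)
definition interval_layout :: "'t set \<Rightarrow> ('t \<Rightarrow> 'r set) \<Rightarrow> ('r \<Rightarrow> nat) \<Rightarrow> bool" where
  "interval_layout T A p \<longleftrightarrow> inj p \<and> separated_on T A p \<and> intervals_on T A p"

lemma intervals_on_side:
  assumes "intervals_on T A p" "\<theta> \<in> T" "r \<in> \<Union>(A ` T)" "r \<notin> A \<theta>"
  shows "(\<forall>a\<in>A \<theta>. p a < p r) \<or> (\<forall>a\<in>A \<theta>. p r < p a)"
  using assms unfolding intervals_on_def by (meson not_less)

lemma interval_layout_reverse:
  fixes p :: "'r::finite \<Rightarrow> nat"
  assumes "interval_layout T A p"
  obtains q where "interval_layout T A q" "\<And>a b. q a \<le> q b \<longleftrightarrow> p b \<le> p a"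
proof
  let ?q = "\<lambda>a. Max (range p) - p a"
  have bound: "p a \<le> Max (range p)" for a
    by (rule Max_ge) auto
  show rev: "?q a \<le> ?q b \<longleftrightarrow> p b \<le> p a" for a b
    using bound[of a] bound[of b] by arith
  have inj: "inj p" and sep: "separated_on T A p" and int: "intervals_on T A p"
    using assms unfolding interval_layout_def by auto
  have "inj ?q"
  proof (rule injI)
    fix a b assume "?q a = ?q b"
    then have "p a = p b" using bound[of a] bound[of b] by arith
    then show "a = b" using inj by (simp add: inj_eq)
  qed
  moreover have "separated_on T A ?q"
    using sep unfolding separated_on_def rev by blast
  moreover have "intervals_on T A ?q"
    using int unfolding intervals_on_def rev by blast
  ultimately show "interval_layout T A ?q"
    unfolding interval_layout_def by blast
qed

lemma interval_layout_transpose: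
  assumes "interval_layout T A p" and same: "\<forall>\<theta>\<in>T. x \<in> A \<theta> \<longleftrightarrow> y \<in> A \<theta>"
  shows "interval_layout T A (p \<circ> Transposition.transpose x y)"
proof -
  let ?\<tau> = "Transposition.transpose x y"
  have inj: "inj p" and sep: "separated_on T A p" and int: "intervals_on T A p"
    using assms unfolding interval_layout_def by auto
  have mem: "?\<tau> a \<in> A \<theta> \<longleftrightarrow> a \<in> A \<theta>" if "\<theta> \<in> T" for a \<theta>
    using same that by (auto simp: Transposition.transpose_def)
  have "inj (p \<circ> ?\<tau>)"
    using inj by (simp add: inj_compose inj_transpose)
  moreover have "separated_on T A (p \<circ> ?\<tau>)"
    unfolding separated_on_def
  proof (intro ballI impI)
    fix \<theta> \<theta>' assume "\<theta> \<in> T" "\<theta>' \<in> T" "\<theta> \<noteq> \<theta>'"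
    then have "(\<forall>a\<in>A \<theta>. \<forall>b\<in>A \<theta>'. p a \<le> p b) \<or> (\<forall>a\<in>A \<theta>. \<forall>b\<in>A \<theta>'. p b \<le> p a)"
      using sep unfolding separated_on_def by blast
    moreover have "?\<tau> a \<in> A \<theta>" "?\<tau> b \<in> A \<theta>'" if "a \<in> A \<theta>" "b \<in> A \<theta>'" for a b
      using that mem \<open>\<theta> \<in> T\<close> \<open>\<theta>' \<in> T\<close> by blast+
    ultimately show "(\<forall>a\<in>A \<theta>. \<forall>b\<in>A \<theta>'. (p \<circ> ?\<tau>) a \<le> (p \<circ> ?\<tau>) b) \<or>
      (\<forall>a\<in>A \<theta>. \<forall>b\<in>A \<theta>'. (p \<circ> ?\<tau>) b \<le> (p \<circ> ?\<tau>) a)"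
      unfolding comp_apply by blast
  qed
  moreover have "intervals_on T A (p \<circ> ?\<tau>)"
    unfolding intervals_on_def
  proof (intro ballI impI)
    fix \<theta> a c b assume "\<theta> \<in> T" "a \<in> A \<theta>" "c \<in> A \<theta>" "b \<in> \<Union>(A ` T)"
      "(p \<circ> ?\<tau>) a \<le> (p \<circ> ?\<tau>) b" "(p \<circ> ?\<tau>) b \<le> (p \<circ> ?\<tau>) c"
    moreover have "?\<tau> b \<in> \<Union>(A ` T)" using \<open>b \<in> \<Union>(A ` T)\<close> mem by blast
    ultimately have "?\<tau> b \<in> A \<theta>"
      using int mem unfolding intervals_on_def by (metis comp_apply)
    then show "b \<in> A \<theta>" using mem \<open>\<theta> \<in> T\<close> by blast
  qed
  ultimately show ?thesis unfolding interval_layout_def by blast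
qed

lemma interval_layout_swap_endpoint:
  assumes L: "interval_layout T A p" and "\<theta>1 \<in> T" "r \<in> A \<theta>1" "x \<in> A \<theta>1"
    and alone: "\<forall>\<theta>\<in>T. r \<in> A \<theta> \<or> x \<in> A \<theta> \<longrightarrow> \<theta> = \<theta>1"
    and x_end: "(\<forall>a\<in>A \<theta>1. p a \<le> p x) \<or> (\<forall>a\<in>A \<theta>1. p x \<le> p a)"
  shows "\<exists>p'. interval_layout T A p' \<and>
    (\<forall>\<theta>\<in>T. r \<in> A \<theta> \<longrightarrow> (\<forall>a\<in>A \<theta>. p' a \<le> p' r) \<or> (\<forall>a\<in>A \<theta>. p' r \<le> p' a))"
proof -
  let ?\<tau> = "Transposition.transpose r x"
  have "\<forall>\<theta>\<in>T. r \<in> A \<theta> \<longleftrightarrow> x \<in> A \<theta>"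
    using alone \<open>r \<in> A \<theta>1\<close> \<open>x \<in> A \<theta>1\<close> by blast
  then have L': "interval_layout T A (p \<circ> ?\<tau>)"
    by (rule interval_layout_transpose[OF L])
  have "?\<tau> a \<in> A \<theta>1" if "a \<in> A \<theta>1" for a
    using that \<open>r \<in> A \<theta>1\<close> \<open>x \<in> A \<theta>1\<close> by (simp add: Transposition.transpose_def)
  then have "(\<forall>a\<in>A \<theta>1. p (?\<tau> a) \<le> p x) \<or> (\<forall>a\<in>A \<theta>1. p x \<le> p (?\<tau> a))"
    using x_end by blast
  then have "(\<forall>a\<in>A \<theta>. (p \<circ> ?\<tau>) a \<le> (p \<circ> ?\<tau>) r) \<or> (\<forall>a\<in>A \<theta>. (p \<circ> ?\<tau>) r \<le> (p \<circ> ?\<tau>) a)"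
    if "\<theta> \<in> T" "r \<in> A \<theta>" for \<theta>
    using alone that by simp
  with L' show ?thesis by blast
qed

lemma mult_add_le_mult_iff:
  fixes k x y c :: nat
  assumes "0 < c" "c < k"
  shows "k * x + c \<le> k * y \<longleftrightarrow> x < y"
proof
  show "x < y" if "k * x + c \<le> k * y"
    using that assms mult_le_mono2[of y x k] by (meson add_le_same_cancel1 le_trans not_less not_le)
  show "k * x + c \<le> k * y" if "x < y"
    using that assms mult_le_mono2[of "Suc x" y k] by simp
qed

lemma mult_le_mult_add_iff:
  fixes k x y c :: nat
  assumes "c < k"
  shows "k * y \<le> k * x + c \<longleftrightarrow> y \<le> x"
proof
  show "y \<le> x" if "k * y \<le> k * x + c"
    using that assms mult_le_mono2[of "Suc x" y k] by (simp add: not_le[symmetric]) (meson not_less_eq_eq)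
  show "k * y \<le> k * x + c" if "y \<le> x"
    using that by (simp add: trans_le_add1)
qed

definition block_inserted_after :: "('r \<Rightarrow> nat) \<Rightarrow> 'r set \<Rightarrow> nat \<Rightarrow> ('r \<Rightarrow> nat) \<Rightarrow> bool" where
  "block_inserted_after p P m q \<longleftrightarrow>
     (\<forall>a b. a \<notin> P \<longrightarrow> b \<notin> P \<longrightarrow> (q a \<le> q b \<longleftrightarrow> p a \<le> p b)) \<and>
     (\<forall>a b. a \<in> P \<longrightarrow> b \<notin> P \<longrightarrow> (q a \<le> q b \<longleftrightarrow> m < p b) \<and> (q b \<le> q a \<longleftrightarrow> p b \<le> m))"

lemma block_inserted_afterD:
  assumes "block_inserted_after p P m q"
  shows "a \<notin> P \<Longrightarrow> b \<notin> P \<Longrightarrow> q a \<le> q b \<longleftrightarrow> p a \<le> p b"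
    and "a \<in> P \<Longrightarrow> b \<notin> P \<Longrightarrow> q a \<le> q b \<longleftrightarrow> m < p b"
    and "a \<in> P \<Longrightarrow> b \<notin> P \<Longrightarrow> q b \<le> q a \<longleftrightarrow> p b \<le> m"
  using assms unfolding block_inserted_after_def by blast+

(* Scaling p by k opens gaps of width k; the block P, ordered by t, fills the gap after m. *)
lemma ex_block_inserted_after:
  fixes p :: "'r::finite \<Rightarrow> nat"
  assumes "inj p"
  shows "\<exists>q. inj q \<and> block_inserted_after p P m q"
proof -
  obtain t :: "'r \<Rightarrow> nat" and n where t: "inj t" "range t = {..<n}"
    using finite_imp_inj_to_nat_seg[of "UNIV :: 'r set"] by (auto simp: lessThan_def)
  define k where "k = Suc n"
  have t_bound: "0 < Suc (t a)" "Suc (t a) < k" for a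
    using t(2) unfolding k_def by auto
  define q where "q a = (if a \<in> P then k * m + Suc (t a) else k * p a)" for a
  have out: "q a \<le> q b \<longleftrightarrow> p a \<le> p b" if "a \<notin> P" "b \<notin> P" for a b
    using that unfolding q_def by (simp add: k_def del: mult_Suc)
  have left: "q a \<le> q b \<longleftrightarrow> m < p b" if "a \<in> P" "b \<notin> P" for a b
    using that mult_add_le_mult_iff[OF t_bound] unfolding q_def by simp
  have right: "q b \<le> q a \<longleftrightarrow> p b \<le> m" if "a \<in> P" "b \<notin> P" for a b
    using that mult_le_mult_add_iff[OF t_bound(2)] unfolding q_def by simp
  have "inj q"
  proof (rule injI)
    fix a b assume eq: "q a = q b"
    consider "a \<in> P" "b \<in> P" | "a \<notin> P" "b \<notin> P" | "a \<in> P" "b \<notin> P" | "a \<notin> P" "b \<in> P"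
      by blast
    then show "a = b"
    proof cases
      case 1
      then show ?thesis using eq \<open>inj t\<close> unfolding q_def by (simp add: inj_eq)
    next
      case 2
      then show ?thesis using eq out[of a b] out[of b a] \<open>inj p\<close> by (simp add: inj_eq)
    next
      case 3
      then show ?thesis using eq left[of a b] right[of a b] by simp
    next
      case 4
      then show ?thesis using eq left[of b a] right[of b a] by simp
    qed
  qed
  moreover have "block_inserted_after p P m q"
    unfolding block_inserted_after_def using out left right by blast
  ultimately show ?thesis by blast
qed

lemma separated_on_insert_block:
  assumes sep: "separated_on T A p" and B: "block_inserted_after p (A \<theta>0 - \<Union>(A ` T)) m q"
    and split: "\<forall>\<theta>\<in>T. (\<forall>a\<in>A \<theta>. p a \<le> m) \<or> (\<forall>a\<in>A \<theta>. m < p a)"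
    and shared: "\<forall>a\<in>A \<theta>0 \<inter> \<Union>(A ` T). p a = m"
  shows "separated_on (insert \<theta>0 T) A q"
proof (rule separated_on_insert)
  define P where "P = A \<theta>0 - \<Union>(A ` T)"
  note out = block_inserted_afterD(1)[OF B[folded P_def]]
    and left = block_inserted_afterD(2)[OF B[folded P_def]]
    and right = block_inserted_afterD(3)[OF B[folded P_def]]
  have old: "a \<notin> P" if "\<theta> \<in> T" "a \<in> A \<theta>" for \<theta> a
    using that unfolding P_def by blast
  have new: "b \<in> P \<or> (b \<notin> P \<and> p b = m)" if "b \<in> A \<theta>0" for b
    using that shared unfolding P_def by blast
  show "separated_on T A q"
    unfolding separated_on_def
  proof (intro ballI impI)
    fix \<theta> \<theta>' assume "\<theta> \<in> T" "\<theta>' \<in> T" "\<theta> \<noteq> \<theta>'"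
    then have "(\<forall>a\<in>A \<theta>. \<forall>b\<in>A \<theta>'. p a \<le> p b) \<or> (\<forall>a\<in>A \<theta>. \<forall>b\<in>A \<theta>'. p b \<le> p a)"
      by (rule separated_onD[OF sep])
    moreover have "q a \<le> q b \<longleftrightarrow> p a \<le> p b" "q b \<le> q a \<longleftrightarrow> p b \<le> p a"
      if "a \<in> A \<theta>" "b \<in> A \<theta>'" for a b
      using that out old \<open>\<theta> \<in> T\<close> \<open>\<theta>' \<in> T\<close> by blast+
    ultimately show "(\<forall>a\<in>A \<theta>. \<forall>b\<in>A \<theta>'. q a \<le> q b) \<or> (\<forall>a\<in>A \<theta>. \<forall>b\<in>A \<theta>'. q b \<le> q a)"
      by blast
  qed
  show "\<forall>\<theta>\<in>T. (\<forall>a\<in>A \<theta>. \<forall>b\<in>A \<theta>0. q a \<le> q b) \<or> (\<forall>a\<in>A \<theta>. \<forall>b\<in>A \<theta>0. q b \<le> q a)"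
  proof
    fix \<theta> assume "\<theta> \<in> T"
    from split \<open>\<theta> \<in> T\<close> consider "\<forall>a\<in>A \<theta>. p a \<le> m" | "\<forall>a\<in>A \<theta>. m < p a" by blast
    then show "(\<forall>a\<in>A \<theta>. \<forall>b\<in>A \<theta>0. q a \<le> q b) \<or> (\<forall>a\<in>A \<theta>. \<forall>b\<in>A \<theta>0. q b \<le> q a)"
    proof cases
      case 1
      have "q a \<le> q b" if "a \<in> A \<theta>" "b \<in> A \<theta>0" for a b
      proof -
        have "a \<notin> P" "p a \<le> m" using old[OF \<open>\<theta> \<in> T\<close> that(1)] 1 that(1) by simp_all
        with new[OF that(2)] show ?thesis using out[of a b] right[of b a] by auto
      qed
      then show ?thesis by blast
    next
      case 2
      have "q b \<le> q a" if "a \<in> A \<theta>" "b \<in> A \<theta>0" for a b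
      proof -
        have "a \<notin> P" "m < p a" using old[OF \<open>\<theta> \<in> T\<close> that(1)] 2 that(1) by simp_all
        with new[OF that(2)] show ?thesis using out[of b a] left[of b a] by auto
      qed
      then show ?thesis by blast
    qed
  qed
qed

lemma intervals_on_insert_block:
  assumes "inj p" and int: "intervals_on T A p" and B: "block_inserted_after p (A \<theta>0 - \<Union>(A ` T)) m q"
    and split: "\<forall>\<theta>\<in>T. (\<forall>a\<in>A \<theta>. p a \<le> m) \<or> (\<forall>a\<in>A \<theta>. m < p a)"
    and shared: "\<forall>a\<in>A \<theta>0 \<inter> \<Union>(A ` T). p a = m"
  shows "intervals_on (insert \<theta>0 T) A q"
  unfolding intervals_on_def
proof (intro ballI impI)
  define P where "P = A \<theta>0 - \<Union>(A ` T)"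
  note out = block_inserted_afterD(1)[OF B[folded P_def]]
    and left = block_inserted_afterD(2)[OF B[folded P_def]]
    and right = block_inserted_afterD(3)[OF B[folded P_def]]
  have new: "a \<in> P \<or> (a \<notin> P \<and> p a = m)" if "a \<in> A \<theta>0" for a
    using that shared unfolding P_def by blast
  fix \<theta> a c b
  assume \<theta>: "\<theta> \<in> insert \<theta>0 T" and ac: "a \<in> A \<theta>" "c \<in> A \<theta>"
    and b: "b \<in> \<Union>(A ` insert \<theta>0 T)" and ab: "q a \<le> q b" and bc: "q b \<le> q c"
  show "b \<in> A \<theta>"
  proof (cases "\<theta> = \<theta>0")
    case True
    show ?thesis
    proof (rule ccontr)
      assume "b \<notin> A \<theta>"
      with True have "b \<notin> P" unfolding P_def by blast
      have "a \<in> A \<theta>0" "c \<in> A \<theta>0" using ac True by simp_all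
      have "m \<le> p b"
        using new[OF \<open>a \<in> A \<theta>0\<close>] ab left[OF _ \<open>b \<notin> P\<close>] out[OF _ \<open>b \<notin> P\<close>] by auto
      moreover have "p b \<le> m"
        using new[OF \<open>c \<in> A \<theta>0\<close>] bc right[OF _ \<open>b \<notin> P\<close>] out[OF \<open>b \<notin> P\<close>] by auto
      ultimately have "p b = m" by simp
      then have "p a = p b"
        using new[OF \<open>a \<in> A \<theta>0\<close>] ab left[OF _ \<open>b \<notin> P\<close>] by auto
      then show False using ac True \<open>b \<notin> A \<theta>\<close> \<open>inj p\<close> by (simp add: inj_eq)
    qed
  next
    case False
    then have "\<theta> \<in> T" using \<theta> by simp
    then have "a \<notin> P" "c \<notin> P" using ac unfolding P_def by auto
    show ?thesis
    proof (cases "b \<in> P")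
      case True
      then have "p a \<le> m" "m < p c"
        using ab bc right[OF True \<open>a \<notin> P\<close>] left[OF True \<open>c \<notin> P\<close>] by simp_all
      moreover have "(\<forall>x\<in>A \<theta>. p x \<le> m) \<or> (\<forall>x\<in>A \<theta>. m < p x)"
        using split \<open>\<theta> \<in> T\<close> by blast
      ultimately show ?thesis using ac by (meson leD)
    next
      case False
      then have "b \<in> \<Union>(A ` T)" using b unfolding P_def by auto
      moreover have "p a \<le> p b" "p b \<le> p c"
        using ab bc out[OF \<open>a \<notin> P\<close> False] out[OF False \<open>c \<notin> P\<close>] by simp_all
      ultimately show ?thesis
        using int \<open>\<theta> \<in> T\<close> ac unfolding intervals_on_def by blast
    qed
  qed
qed

lemma interval_layout_insert_block:
  fixes p :: "'r::finite \<Rightarrow> nat"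
  assumes L: "interval_layout T A p"
    and split: "\<forall>\<theta>\<in>T. (\<forall>a\<in>A \<theta>. p a \<le> m) \<or> (\<forall>a\<in>A \<theta>. m < p a)"
    and shared: "\<forall>a\<in>A \<theta>0 \<inter> \<Union>(A ` T). p a = m"
  shows "\<exists>q. interval_layout (insert \<theta>0 T) A q"
proof -
  have "inj p" and sep: "separated_on T A p" and int: "intervals_on T A p"
    using L unfolding interval_layout_def by auto
  then obtain q where "inj q" and B: "block_inserted_after p (A \<theta>0 - \<Union>(A ` T)) m q"
    using ex_block_inserted_after by blast
  then show ?thesis
    using separated_on_insert_block[OF sep B split shared]
      intervals_on_insert_block[OF \<open>inj p\<close> int B split shared]
    unfolding interval_layout_def by blast
qed

lemma interval_layout_insert_point:
  assumes L: "interval_layout T A p" and point: "A \<theta>0 = {r0}" "r0 \<in> \<Union>(A ` T)"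
    and ends: "\<forall>\<theta>\<in>T. r0 \<in> A \<theta> \<longrightarrow> (\<forall>a\<in>A \<theta>. p a \<le> p r0) \<or> (\<forall>a\<in>A \<theta>. p r0 \<le> p a)"
  shows "interval_layout (insert \<theta>0 T) A p"
proof -
  have inj: "inj p" and sep: "separated_on T A p" and int: "intervals_on T A p"
    using L unfolding interval_layout_def by auto
  have "(\<forall>a\<in>A \<theta>. p a \<le> p r0) \<or> (\<forall>a\<in>A \<theta>. p r0 \<le> p a)" if "\<theta> \<in> T" for \<theta>
  proof (cases "r0 \<in> A \<theta>")
    case False
    then show ?thesis using intervals_on_side[OF int that point(2)] by (meson less_imp_le)
  qed (use ends that in blast)
  then have "separated_on (insert \<theta>0 T) A p"
    using separated_on_insert[OF sep] point(1) by simp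
  moreover have "intervals_on (insert \<theta>0 T) A p"
    unfolding intervals_on_def
  proof (intro ballI impI)
    fix \<theta> a c b
    assume \<theta>: "\<theta> \<in> insert \<theta>0 T" and ac: "a \<in> A \<theta>" "c \<in> A \<theta>"
      and b: "b \<in> \<Union>(A ` insert \<theta>0 T)" and ab: "p a \<le> p b" and bc: "p b \<le> p c"
    show "b \<in> A \<theta>"
    proof (cases "\<theta> = \<theta>0")
      case True
      then have "p b = p r0" using ac ab bc point(1) by simp
      then show ?thesis using True point(1) inj by (simp add: inj_eq)
    next
      case False
      have "b \<in> \<Union>(A ` T)" using b point by auto
      then show ?thesis
        using int False \<theta> ac ab bc unfolding intervals_on_def by blast
    qed
  qed
  ultimately show ?thesis using inj unfolding interval_layout_def by blast
qed

section \<open>Sufficiency\<close>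

lemma forbidden_triple_of_shared_endpoints:
  assumes sep: "separated_on T (set_pmf \<circ> s1) p" and "\<theta>0 \<notin> T" "r0 \<in> set_pmf (s1 \<theta>0)"
    and \<theta>1: "\<theta>1 \<in> T" "{n, r0, m} \<subseteq> set_pmf (s1 \<theta>1)" "p n < p r0" "p r0 < p m"
    and \<theta>n: "\<theta>n \<in> T" "\<theta>n \<noteq> \<theta>1" "n \<in> set_pmf (s1 \<theta>n)"
    and \<theta>m: "\<theta>m \<in> T" "\<theta>m \<noteq> \<theta>1" "m \<in> set_pmf (s1 \<theta>m)"
  shows "has_forbidden_triple s1"
proof -
  have "\<theta>m \<noteq> \<theta>n"
  proof
    assume "\<theta>m = \<theta>n"
    have "(\<forall>a\<in>set_pmf (s1 \<theta>1). \<forall>b\<in>set_pmf (s1 \<theta>m). p a \<le> p b) \<or>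
      (\<forall>a\<in>set_pmf (s1 \<theta>1). \<forall>b\<in>set_pmf (s1 \<theta>m). p b \<le> p a)"
      using separated_onD[OF sep \<theta>1(1) \<theta>m(1) \<theta>m(2)[symmetric]] by simp
    then have "p m \<le> p n" using \<theta>1(2) \<theta>m(3) \<theta>n(3) \<open>\<theta>m = \<theta>n\<close> by blast
    then show False using \<theta>1(3,4) by simp
  qed
  then show ?thesis
    using \<theta>1 \<theta>n \<theta>m \<open>\<theta>0 \<notin> T\<close> \<open>r0 \<in> set_pmf (s1 \<theta>0)\<close>
    by (intro has_forbidden_tripleI1[of n r0 m \<theta>n \<theta>0 \<theta>m \<theta>1]) auto
qed

lemma forbidden_triple_of_shared_point:
  assumes "inj p" and sep: "separated_on T (set_pmf \<circ> s1) p"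
    and "\<theta>0 \<notin> T" "r0 \<in> set_pmf (s1 \<theta>0)"
    and x: "x \<in> set_pmf (s1 \<theta>0)" "x \<noteq> r0" "x \<notin> \<Union>((set_pmf \<circ> s1) ` T)"
    and \<theta>1: "\<theta>1 \<in> T" "{r0, b1} \<subseteq> set_pmf (s1 \<theta>1)" "b1 \<noteq> r0"
    and \<theta>: "\<theta> \<in> T" "{r0, b} \<subseteq> set_pmf (s1 \<theta>)" "b \<noteq> r0" "\<theta> \<noteq> \<theta>1"
  shows "has_forbidden_triple s1"
proof -
  have "b1 \<noteq> b"
  proof
    assume "b1 = b"
    then have "p b1 = p r0"
      using sep \<theta>1 \<theta> unfolding separated_on_def by (simp, meson antisym)
    then show False using \<theta>1(3) \<open>inj p\<close> by (simp add: inj_eq)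
  qed
  moreover have "x \<noteq> b1" "x \<noteq> b" using x(3) \<theta>1(1,2) \<theta>(1,2) by auto
  ultimately show ?thesis
    using \<theta>1 \<theta> x(1,2) \<open>\<theta>0 \<notin> T\<close> \<open>r0 \<in> set_pmf (s1 \<theta>0)\<close>
    by (intro has_forbidden_tripleI2[of \<theta>1 \<theta> \<theta>0 b1 b x r0]) auto
qed

(* If r0 is interior to some supp theta1, that support is the only one containing r0.  Swap r0
   with an endpoint of supp theta1 lying in no other support; if both endpoints are shared,
   they form a forbidden triple of the first kind with r0. *)
lemma interval_layout_endpoint:
  fixes s1 :: "'t \<Rightarrow> 'r::finite pmf"
  assumes L: "interval_layout T (set_pmf \<circ> s1) p" and "\<theta>0 \<notin> T" "r0 \<in> set_pmf (s1 \<theta>0)"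
    and nft: "\<not> has_forbidden_triple s1"
  shows "\<exists>p'. interval_layout T (set_pmf \<circ> s1) p' \<and> (\<forall>\<theta>\<in>T. r0 \<in> set_pmf (s1 \<theta>) \<longrightarrow>
    (\<forall>a\<in>set_pmf (s1 \<theta>). p' a \<le> p' r0) \<or> (\<forall>a\<in>set_pmf (s1 \<theta>). p' r0 \<le> p' a))"
proof (cases "\<forall>\<theta>\<in>T. r0 \<in> set_pmf (s1 \<theta>) \<longrightarrow>
    (\<forall>a\<in>set_pmf (s1 \<theta>). p a \<le> p r0) \<or> (\<forall>a\<in>set_pmf (s1 \<theta>). p r0 \<le> p a)")
  case True
  with L show ?thesis by blast
next
  case False
  have sep: "separated_on T (set_pmf \<circ> s1) p"
    using L unfolding interval_layout_def by auto
  from False obtain \<theta>1 a1 c1 where \<theta>1: "\<theta>1 \<in> T" "r0 \<in> set_pmf (s1 \<theta>1)"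
    and a1: "a1 \<in> set_pmf (s1 \<theta>1)" "p a1 < p r0" and c1: "c1 \<in> set_pmf (s1 \<theta>1)" "p r0 < p c1"
    by (meson not_le)
  have only_\<theta>1: "\<theta> = \<theta>1" if "\<theta> \<in> T" "r0 \<in> set_pmf (s1 \<theta>)" for \<theta>
  proof (rule ccontr)
    assume "\<theta> \<noteq> \<theta>1"
    then have "(\<forall>a\<in>set_pmf (s1 \<theta>1). p a \<le> p r0) \<or> (\<forall>a\<in>set_pmf (s1 \<theta>1). p r0 \<le> p a)"
      using separated_on_shared_endpoint[OF sep \<theta>1(1) that(1)] \<theta>1(2) that(2) by simp
    then show False using a1 c1 by (meson leD)
  qed
  have swap: ?thesis if "x \<in> set_pmf (s1 \<theta>1)" "\<forall>\<theta>\<in>T. x \<in> set_pmf (s1 \<theta>) \<longrightarrow> \<theta> = \<theta>1"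
    and "(\<forall>a\<in>set_pmf (s1 \<theta>1). p a \<le> p x) \<or> (\<forall>a\<in>set_pmf (s1 \<theta>1). p x \<le> p a)" for x
    using interval_layout_swap_endpoint[OF L \<theta>1(1), of r0 x] that \<theta>1(2) only_\<theta>1 by simp
  have fin: "finite (set_pmf (s1 \<theta>1))" "set_pmf (s1 \<theta>1) \<noteq> {}"
    using \<theta>1(2) by auto
  obtain m where m: "m \<in> set_pmf (s1 \<theta>1)" "\<forall>a\<in>set_pmf (s1 \<theta>1). p a \<le> p m"
    by (rule finite_obtain_max[OF fin, where f = p]) blast
  obtain n where n: "n \<in> set_pmf (s1 \<theta>1)" "\<forall>a\<in>set_pmf (s1 \<theta>1). p n \<le> p a"
    by (rule finite_obtain_min[OF fin, where f = p]) blast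
  consider "\<forall>\<theta>\<in>T. m \<in> set_pmf (s1 \<theta>) \<longrightarrow> \<theta> = \<theta>1" | "\<forall>\<theta>\<in>T. n \<in> set_pmf (s1 \<theta>) \<longrightarrow> \<theta> = \<theta>1"
    | \<theta>m \<theta>n where "\<theta>m \<in> T" "m \<in> set_pmf (s1 \<theta>m)" "\<theta>m \<noteq> \<theta>1"
        "\<theta>n \<in> T" "n \<in> set_pmf (s1 \<theta>n)" "\<theta>n \<noteq> \<theta>1"
    by blast
  then show ?thesis
  proof cases
    case 1
    then show ?thesis using swap m by blast
  next
    case 2
    then show ?thesis using swap n by blast
  next
    case 3
    have "p n \<le> p a1" "p c1 \<le> p m" using a1(1) c1(1) m(2) n(2) by blast+
    then have "p n < p r0" "p r0 < p m" using a1(2) c1(2) by linarith+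
    with 3 have "has_forbidden_triple s1"
      using forbidden_triple_of_shared_endpoints[OF sep] \<theta>1 m(1) n(1) \<open>\<theta>0 \<notin> T\<close> \<open>r0 \<in> set_pmf (s1 \<theta>0)\<close>
      by blast
    then show ?thesis using nft by blast
  qed
qed

(* At most one support containing r0 has a second point, otherwise two of them and supp theta0
   (through its private point x) form a forbidden triple of the second kind.  Reversing the
   ranking turns r0 from the minimum into the maximum of that support. *)
lemma interval_layout_top:
  fixes s1 :: "'t \<Rightarrow> 'r::finite pmf"
  assumes L: "interval_layout T (set_pmf \<circ> s1) p" and "\<theta>0 \<notin> T" "r0 \<in> set_pmf (s1 \<theta>0)"
    and x: "x \<in> set_pmf (s1 \<theta>0)" "x \<noteq> r0" "x \<notin> \<Union>((set_pmf \<circ> s1) ` T)"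
    and ends: "\<forall>\<theta>\<in>T. r0 \<in> set_pmf (s1 \<theta>) \<longrightarrow>
      (\<forall>a\<in>set_pmf (s1 \<theta>). p a \<le> p r0) \<or> (\<forall>a\<in>set_pmf (s1 \<theta>). p r0 \<le> p a)"
    and nft: "\<not> has_forbidden_triple s1"
  shows "\<exists>p'. interval_layout T (set_pmf \<circ> s1) p' \<and>
    (\<forall>\<theta>\<in>T. r0 \<in> set_pmf (s1 \<theta>) \<longrightarrow> (\<forall>a\<in>set_pmf (s1 \<theta>). p' a \<le> p' r0))"
proof (cases "\<exists>\<theta>1\<in>T. \<exists>b1\<in>set_pmf (s1 \<theta>1). r0 \<in> set_pmf (s1 \<theta>1) \<and> b1 \<noteq> r0")
  case False
  with L show ?thesis by (intro exI[of _ p] conjI) auto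
next
  case True
  have "inj p" and sep: "separated_on T (set_pmf \<circ> s1) p"
    using L unfolding interval_layout_def by auto
  from True obtain \<theta>1 b1 where \<theta>1: "\<theta>1 \<in> T" "r0 \<in> set_pmf (s1 \<theta>1)"
    and b1: "b1 \<in> set_pmf (s1 \<theta>1)" "b1 \<noteq> r0"
    by blast
  have only_\<theta>1: "\<theta> = \<theta>1" if "\<theta> \<in> T" "r0 \<in> set_pmf (s1 \<theta>)" "b \<in> set_pmf (s1 \<theta>)" "b \<noteq> r0" for \<theta> b
    using forbidden_triple_of_shared_point[OF \<open>inj p\<close> sep \<open>\<theta>0 \<notin> T\<close> \<open>r0 \<in> set_pmf (s1 \<theta>0)\<close> x \<theta>1(1) _ b1(2)]
      \<theta>1(2) b1(1) that nft by blast
  have top: "\<forall>\<theta>\<in>T. r0 \<in> set_pmf (s1 \<theta>) \<longrightarrow> (\<forall>a\<in>set_pmf (s1 \<theta>). q a \<le> q r0)"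
    if "\<forall>a\<in>set_pmf (s1 \<theta>1). q a \<le> q r0" for q :: "'r \<Rightarrow> nat"
    using that only_\<theta>1 by (metis order.refl)
  from ends \<theta>1 consider "\<forall>a\<in>set_pmf (s1 \<theta>1). p a \<le> p r0" | "\<forall>a\<in>set_pmf (s1 \<theta>1). p r0 \<le> p a"
    by blast
  then show ?thesis
  proof cases
    case 1
    then show ?thesis using top L by blast
  next
    case 2
    obtain q where "interval_layout T (set_pmf \<circ> s1) q" "\<And>a b. q a \<le> q b \<longleftrightarrow> p b \<le> p a"
      using interval_layout_reverse[OF L] by blast
    then show ?thesis using top[of q] 2 by blast
  qed
qed

lemma interval_layout_insert_leaf:
  fixes s1 :: "'t \<Rightarrow> 'r::finite pmf"
  assumes L: "interval_layout T (set_pmf \<circ> s1) p" and "\<theta>0 \<notin> T"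
    and leaf: "set_pmf (s1 \<theta>0) \<inter> \<Union>((set_pmf \<circ> s1) ` T) \<subseteq> {r0}"
    and nft: "\<not> has_forbidden_triple s1"
  shows "\<exists>q. interval_layout (insert \<theta>0 T) (set_pmf \<circ> s1) q"
proof (cases "r0 \<in> set_pmf (s1 \<theta>0) \<inter> \<Union>((set_pmf \<circ> s1) ` T)")
  case False
  then have "set_pmf (s1 \<theta>0) \<inter> \<Union>((set_pmf \<circ> s1) ` T) = {}" using leaf by blast
  then show ?thesis
    by (intro interval_layout_insert_block[OF L, where m = "Max (range p)"]) auto
next
  case True
  then have r0: "r0 \<in> set_pmf (s1 \<theta>0)" "r0 \<in> \<Union>((set_pmf \<circ> s1) ` T)" by auto
  have shared: "set_pmf (s1 \<theta>0) \<inter> \<Union>((set_pmf \<circ> s1) ` T) = {r0}" using leaf True by blast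
  obtain p1 where L1: "interval_layout T (set_pmf \<circ> s1) p1"
    and ends: "\<forall>\<theta>\<in>T. r0 \<in> set_pmf (s1 \<theta>) \<longrightarrow>
      (\<forall>a\<in>set_pmf (s1 \<theta>). p1 a \<le> p1 r0) \<or> (\<forall>a\<in>set_pmf (s1 \<theta>). p1 r0 \<le> p1 a)"
    using interval_layout_endpoint[OF L \<open>\<theta>0 \<notin> T\<close> r0(1) nft] by blast
  show ?thesis
  proof (cases "set_pmf (s1 \<theta>0) = {r0}")
    case True
    then show ?thesis
      using interval_layout_insert_point[OF L1 _ r0(2)] ends by auto
  next
    case False
    then obtain x where x: "x \<in> set_pmf (s1 \<theta>0)" "x \<noteq> r0" using r0(1) by blast
    then have "x \<notin> \<Union>((set_pmf \<circ> s1) ` T)" using shared by blast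
    then obtain p2 where L2: "interval_layout T (set_pmf \<circ> s1) p2"
      and top: "\<forall>\<theta>\<in>T. r0 \<in> set_pmf (s1 \<theta>) \<longrightarrow> (\<forall>a\<in>set_pmf (s1 \<theta>). p2 a \<le> p2 r0)"
      using interval_layout_top[OF L1 \<open>\<theta>0 \<notin> T\<close> r0(1) x _ ends nft] by blast
    have int2: "intervals_on T (set_pmf \<circ> s1) p2" using L2 unfolding interval_layout_def by blast
    have "(\<forall>a\<in>set_pmf (s1 \<theta>). p2 a \<le> p2 r0) \<or> (\<forall>a\<in>set_pmf (s1 \<theta>). p2 r0 < p2 a)"
      if "\<theta> \<in> T" for \<theta>
    proof (cases "r0 \<in> set_pmf (s1 \<theta>)")
      case False
      then show ?thesis
        using intervals_on_side[OF int2 that r0(2)] by (auto simp: less_imp_le)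
    qed (use top that in blast)
    then show ?thesis
      using shared by (intro interval_layout_insert_block[OF L2, where m = "p2 r0"]) auto
  qed
qed

lemma interval_layout_exists:
  fixes s1 :: "'t::finite \<Rightarrow> 'r::finite pmf"
  assumes acyc: "G_acyclic s1" and nft: "\<not> has_forbidden_triple s1"
  shows "\<exists>p. interval_layout T (set_pmf \<circ> s1) p"
proof (induction T rule: finite_remove_induct[OF finite])
  case 1
  obtain p :: "'r \<Rightarrow> nat" where "inj p"
    using finite_imp_inj_to_nat_seg[of "UNIV :: 'r set"] by blast
  then show ?case
    unfolding interval_layout_def separated_on_def intervals_on_def by blast
next
  case (2 T)
  obtain \<theta>0 r0 where "\<theta>0 \<in> T"
    and leaf: "set_pmf (s1 \<theta>0) \<inter> \<Union>((set_pmf \<circ> s1) ` (T - {\<theta>0})) \<subseteq> {r0}"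
    using G_acyclic_ex_leaf[OF acyc \<open>T \<noteq> {}\<close>] by blast
  obtain p where L: "interval_layout (T - {\<theta>0}) (set_pmf \<circ> s1) p"
    using "2.IH"[OF \<open>\<theta>0 \<in> T\<close>] by blast
  have "T = insert \<theta>0 (T - {\<theta>0})" using \<open>\<theta>0 \<in> T\<close> by blast
  then show ?case
    using interval_layout_insert_leaf[OF L _ leaf nft] by (simp add: comp_def)
qed

theorem proposition10:
  fixes s1 :: "'t::finite \<Rightarrow> 'r::finite pmf"
  shows "(\<exists>leT leR. linear_order_on UNIV leT \<and> linear_order_on UNIV leR \<and> monotone_wrt s1 leT leR)
         \<longleftrightarrow> (G_acyclic s1 \<and> \<not> has_forbidden_triple s1)"
  unfolding monotone_wrt_ex_iff_rank_monotone
proof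
  assume "\<exists>(f :: 't \<Rightarrow> nat) (g :: 'r \<Rightarrow> nat). inj f \<and> inj g \<and> rank_monotone (set_pmf \<circ> s1) f g"
  then obtain f :: "'t \<Rightarrow> nat" and g :: "'r \<Rightarrow> nat"
    where "inj f" "inj g" and mono: "rank_monotone (set_pmf \<circ> s1) f g"
    by blast
  have "G_acyclic s1"
    by (rule rank_monotone_acyclic[OF \<open>inj f\<close> \<open>inj g\<close> mono])
  moreover have "\<not> has_forbidden_triple s1"
    by (rule separated_no_forbidden_triple[OF \<open>inj g\<close> rank_monotone_separated[OF \<open>inj f\<close> mono]])
  ultimately show "G_acyclic s1 \<and> \<not> has_forbidden_triple s1" ..
next
  assume "G_acyclic s1 \<and> \<not> has_forbidden_triple s1"
  then obtain p where "interval_layout UNIV (set_pmf \<circ> s1) p"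
    using interval_layout_exists by blast
  then have "inj p" and sep: "separated_on UNIV (set_pmf \<circ> s1) p"
    unfolding interval_layout_def by auto
  obtain f :: "'t \<Rightarrow> nat" where "inj f" "rank_monotone (set_pmf \<circ> s1) f p"
    using separated_on_UNIV_ex_rank_monotone[OF sep] by (auto simp: set_pmf_not_empty)
  with \<open>inj p\<close> show "\<exists>(f :: 't \<Rightarrow> nat) (g :: 'r \<Rightarrow> nat). inj f \<and> inj g \<and> rank_monotone (set_pmf \<circ> s1) f g"
    by blast
qed

end
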